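(* Let $x_0>0$, $y_0>0$, and let $T>0$, $c_0>0$ satisfy \[ |x_0|+|x_0-y_0^2|T\le c_0,\quad |y_0|+|y_0-x_0^2|T\le c_0,\quad |x_0|+c_0T+c_0^2T\le c_0,\quad |y_0|+c_0T+c_0^2T\le c_0. \] Then there exists $(x,y)\in C^1([0,T];\mathbb{R}^2)$ solving \[ \dot x(t)=x(t)-\max_{s\in[0,t]}y^2(s),\qquad \dot y(t)=y(t)-\max_{s\in[0,t]}x^2(s),\quad t\in[0,T],\qquad x(0)=x_0,\ y(0)=y_0. \] *)

theory Defs
  imports "HOL-Analysis.Analysis"
begin

end

theory Submission
  imports Defs
begin

text \<open>Clamping x and y to [-c, c] makes the right-hand side globally Lipschitz with
  constant 1 + 2c, and since the running maximum only looks into the past, this also holds for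
  the weighted distance sup_t e^(-K t) |x t - x' t|. For K = 4 (1 + 2c) the Picard operator of the
  truncated system halves this distance, so Banach's fixed point theorem gives a solution on
  [0, T]. The truncated right-hand side is bounded by c + c^2, hence |x0| + (c + c^2) T \<le> c keeps
  the solution inside [-c, c], where the truncation does nothing.\<close>

definition running_max :: "(real \<Rightarrow> real) \<Rightarrow> real \<Rightarrow> real" where
  "running_max g t = (SUP s\<in>{0..t}. g s)"

lemma bdd_above_continuous_image_Icc:
  fixes g :: "real \<Rightarrow> real"
  assumes "continuous_on {a..b} g"
  shows "bdd_above (g ` {a..b})"
  using assms by (meson bounded_imp_bdd_above compact_Icc compact_continuous_image compact_imp_bounded)

lemma running_max_upper:
  assumes "bdd_above (g ` {0..t})" "s \<in> {0..t}"
  shows "g s \<le> running_max g t"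
  unfolding running_max_def using assms by (rule cSUP_upper2) simp

lemma running_max_least:
  assumes "0 \<le> t" "\<And>s. s \<in> {0..t} \<Longrightarrow> g s \<le> C"
  shows "running_max g t \<le> C"
  unfolding running_max_def using assms by (intro cSUP_least) auto

lemma running_max_mono:
  assumes "bdd_above (g ` {0..b})" "0 \<le> a" "a \<le> b"
  shows "running_max g a \<le> running_max g b"
  using assms by (intro running_max_least running_max_upper) auto

lemma running_max_increment:
  assumes bdd: "bdd_above (g ` {0..b})" and "0 \<le> a" "a \<le> b" "p \<in> {a..b}"
    and osc: "\<And>s. s \<in> {a..b} \<Longrightarrow> \<bar>g s - g p\<bar> \<le> e"
  shows "\<bar>running_max g b - running_max g a\<bar> \<le> 2 * e"
proof -
  have bdd_a: "bdd_above (g ` {0..a})"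
    using bdd by (rule bdd_above_mono) (use assms in auto)
  have "running_max g b \<le> max (running_max g a) (g a + 2 * e)"
  proof (rule running_max_least)
    fix s assume s: "s \<in> {0..b}"
    show "g s \<le> max (running_max g a) (g a + 2 * e)"
    proof (cases "s \<le> a")
      case True
      then show ?thesis using running_max_upper[OF bdd_a, of s] s by simp
    next
      case False
      then have "\<bar>g s - g p\<bar> \<le> e" "\<bar>g a - g p\<bar> \<le> e"
        using s assms by (auto intro!: osc)
      then show ?thesis by linarith
    qed
  qed (use assms in auto)
  moreover have "g a \<le> running_max g a"
    using assms by (intro running_max_upper[OF bdd_a]) auto
  moreover have "running_max g a \<le> running_max g b"
    using assms by (intro running_max_mono) auto
  moreover have "0 \<le> e"
    using osc[of p] assms by auto
  ultimately show ?thesis by (auto simp: max_def split: if_splits)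
qed

lemma continuous_on_running_max:
  assumes cont: "continuous_on {0..} g"
  shows "continuous_on {0..} (running_max g)"
  unfolding continuous_on_iff
proof (intro ballI allI impI)
  fix t e :: real assume t: "t \<in> {0..}" and e: "0 < e"
  then obtain d where d: "0 < d" "\<And>s. s \<in> {0..} \<Longrightarrow> dist s t < d \<Longrightarrow> dist (g s) (g t) < e / 3"
    using cont unfolding continuous_on_iff by (metis divide_pos_pos zero_less_numeral)
  show "\<exists>d>0. \<forall>s\<in>{0..}. dist s t < d \<longrightarrow> dist (running_max g s) (running_max g t) < e"
  proof (intro exI conjI ballI impI)
    fix s assume s: "s \<in> {0..}" "dist s t < d"
    have "bdd_above (g ` {0..max s t})"
      by (rule bdd_above_continuous_image_Icc, rule continuous_on_subset[OF cont]) auto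
    then have "\<bar>running_max g (max s t) - running_max g (min s t)\<bar> \<le> 2 * (e / 3)"
    proof (rule running_max_increment)
      fix r assume "r \<in> {min s t..max s t}"
      then have "r \<in> {0..}" "dist r t < d"
        using s t by (auto simp: dist_real_def)
      then show "\<bar>g r - g t\<bar> \<le> e / 3"
        using d(2) by (fastforce simp: dist_real_def)
    qed (use s t in auto)
    then show "dist (running_max g s) (running_max g t) < e"
      using e by (cases "s \<le> t") (auto simp: dist_real_def max_def min_def abs_minus_commute)
  qed (use d in auto)
qed

lemma running_max_dist:
  assumes "bdd_above (g ` {0..t})" "bdd_above (h ` {0..t})" "0 \<le> t"
    and "\<And>s. s \<in> {0..t} \<Longrightarrow> \<bar>g s - h s\<bar> \<le> D"
  shows "\<bar>running_max g t - running_max h t\<bar> \<le> D"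
proof -
  have "running_max g t \<le> running_max h t + D"
    using assms running_max_upper[OF assms(2)] by (intro running_max_least) force+
  moreover have "running_max h t \<le> running_max g t + D"
    using assms running_max_upper[OF assms(1)] by (intro running_max_least) force+
  ultimately show ?thesis by linarith
qed

lemma abs_clamp_le:
  fixes v c :: real
  assumes "0 \<le> c"
  shows "\<bar>clamp (-c) c v\<bar> \<le> c"
  using clamp_in_interval[of "-c" c v] assms by (simp add: abs_le_iff)

lemma clamp_square_le:
  fixes v c :: real
  assumes "0 \<le> c"
  shows "(clamp (-c) c v)^2 \<le> c^2"
  using power_mono[OF abs_clamp_le[OF assms, of v] abs_ge_zero, of 2] by simp

lemma abs_clamp_diff_le:
  fixes v w a b :: real
  shows "\<bar>clamp a b v - clamp a b w\<bar> \<le> \<bar>v - w\<bar>"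
  using dist_clamps_le_dist_args[of a b v w] by (simp add: dist_real_def)

lemma abs_clamp_square_diff_le:
  fixes v w c :: real
  assumes "0 \<le> c"
  shows "\<bar>(clamp (-c) c v)^2 - (clamp (-c) c w)^2\<bar> \<le> 2 * c * \<bar>v - w\<bar>"
proof -
  have "\<bar>(clamp (-c) c v)^2 - (clamp (-c) c w)^2\<bar>
      = \<bar>clamp (-c) c v + clamp (-c) c w\<bar> * \<bar>clamp (-c) c v - clamp (-c) c w\<bar>"
    by (simp add: power2_eq_square abs_mult[symmetric] algebra_simps)
  also have "\<dots> \<le> (2 * c) * \<bar>v - w\<bar>"
    using abs_clamp_le[OF assms, of v] abs_clamp_le[OF assms, of w]
    by (intro mult_mono abs_clamp_diff_le) auto
  finally show ?thesis .
qed

lemma continuous_on_clamp_real: "continuous_on S (clamp a (b::real))"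
  using clamp_continuous_on[of a b "\<lambda>x. x"] by simp

definition truncated_rhs :: "real \<Rightarrow> (real \<Rightarrow> real) \<Rightarrow> (real \<Rightarrow> real) \<Rightarrow> real \<Rightarrow> real" where
  "truncated_rhs c x y t = clamp (-c) c (x t) - running_max (\<lambda>s. (clamp (-c) c (y s))^2) t"

lemma bdd_above_clamp_square:
  fixes c :: real
  assumes "0 \<le> c"
  shows "bdd_above ((\<lambda>s. (clamp (-c) c (y s))^2) ` A)"
  by (rule bdd_aboveI2[where M="c^2"]) (simp add: clamp_square_le assms)

lemma continuous_on_truncated_rhs:
  assumes "continuous_on {0..} x" "continuous_on {0..} y"
  shows "continuous_on {0..} (truncated_rhs c x y)"
proof -
  have "continuous_on {0..} (\<lambda>s. (clamp (-c) c (y s))^2)"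
    by (intro continuous_intros continuous_on_compose2[OF continuous_on_clamp_real assms(2)]) auto
  then have "continuous_on {0..} (running_max (\<lambda>s. (clamp (-c) c (y s))^2))"
    by (rule continuous_on_running_max)
  moreover have "continuous_on {0..} (\<lambda>s. clamp (-c) c (x s))"
    by (rule continuous_on_compose2[OF continuous_on_clamp_real assms(1)]) auto
  ultimately show ?thesis
    unfolding truncated_rhs_def by (intro continuous_intros)
qed

lemma abs_truncated_rhs_le:
  assumes "0 \<le> c" "0 \<le> t"
  shows "\<bar>truncated_rhs c x y t\<bar> \<le> c + c^2"
proof -
  let ?g = "\<lambda>s. (clamp (-c) c (y s))^2"
  have "?g 0 \<le> running_max ?g t"
    using assms by (intro running_max_upper bdd_above_clamp_square) auto
  moreover have "running_max ?g t \<le> c^2"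
    using assms by (intro running_max_least clamp_square_le)
  moreover have "\<bar>clamp (-c) c (x t)\<bar> \<le> c"
    by (rule abs_clamp_le[OF assms(1)])
  ultimately show ?thesis
    unfolding truncated_rhs_def by (smt (verit) zero_le_power2)
qed

lemma truncated_rhs_weighted_lipschitz:
  assumes c: "0 \<le> c" and K: "0 \<le> K" and t: "0 \<le> t"
    and dx: "\<And>s. s \<in> {0..t} \<Longrightarrow> \<bar>x s - x' s\<bar> \<le> d * exp (K * s)"
    and dy: "\<And>s. s \<in> {0..t} \<Longrightarrow> \<bar>y s - y' s\<bar> \<le> d * exp (K * s)"
  shows "\<bar>truncated_rhs c x y t - truncated_rhs c x' y' t\<bar> \<le> (1 + 2 * c) * d * exp (K * t)"
proof -
  have "\<bar>x 0 - x' 0\<bar> \<le> d"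
    using dx[of 0] t by simp
  then have d: "0 \<le> d"
    by linarith
  have "\<bar>clamp (-c) c (x t) - clamp (-c) c (x' t)\<bar> \<le> d * exp (K * t)"
    using abs_clamp_diff_le dx[of t] t by (fastforce intro: order_trans)
  moreover have "\<bar>running_max (\<lambda>s. (clamp (-c) c (y s))^2) t
      - running_max (\<lambda>s. (clamp (-c) c (y' s))^2) t\<bar> \<le> 2 * c * (d * exp (K * t))"
  proof (rule running_max_dist[OF bdd_above_clamp_square[OF c] bdd_above_clamp_square[OF c] t])
    fix s assume s: "s \<in> {0..t}"
    have "\<bar>y s - y' s\<bar> \<le> d * exp (K * t)"
      using dy[OF s] s K d by (smt (verit) atLeastAtMost_iff exp_le_cancel_iff mult_left_mono)
    then show "\<bar>(clamp (-c) c (y s))^2 - (clamp (-c) c (y' s))^2\<bar> \<le> 2 * c * (d * exp (K * t))"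
      using abs_clamp_square_diff_le[OF c, of "y s" "y' s"] c
      by (smt (verit) mult_left_mono zero_le_mult_iff)
  qed
  ultimately show ?thesis
    unfolding truncated_rhs_def by (simp add: algebra_simps abs_le_iff)
qed

lemma abs_integral_truncated_rhs_le:
  assumes "continuous_on {0..} x" "continuous_on {0..} y" "0 \<le> c" "0 \<le> t"
  shows "\<bar>integral {0..t} (truncated_rhs c x y)\<bar> \<le> (c + c^2) * t"
proof -
  have "norm (integral {0..t} (truncated_rhs c x y)) \<le> (c + c^2) * (t - 0)"
    using assms abs_truncated_rhs_le[OF assms(3)]
    by (intro integral_bound continuous_on_subset[OF continuous_on_truncated_rhs]) auto
  then show ?thesis by simp
qed

lemma has_integral_exp_scaled:
  fixes K t :: real
  assumes "K \<noteq> 0" "0 \<le> t"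
  shows "((\<lambda>s. exp (K * s)) has_integral (exp (K * t) - 1) / K) {0..t}"
proof -
  have "((\<lambda>s. exp (K * s) / K) has_real_derivative exp (K * s)) (at s within {0..t})" for s
    using assms by (auto intro!: derivative_eq_intros)
  then have "((\<lambda>s. exp (K * s)) has_integral (exp (K * t) / K - exp (K * 0) / K)) {0..t}"
    by (intro fundamental_theorem_of_calculus[OF assms(2)])
       (simp add: has_real_derivative_iff_has_vector_derivative[symmetric])
  then show ?thesis by (simp add: diff_divide_distrib)
qed

lemma integral_truncated_rhs_weighted_lipschitz:
  assumes cont: "continuous_on {0..} x" "continuous_on {0..} y"
      "continuous_on {0..} x'" "continuous_on {0..} y'"
    and c: "0 \<le> c" and K: "0 < K" and t: "0 \<le> t"
    and dx: "\<And>s. 0 \<le> s \<Longrightarrow> \<bar>x s - x' s\<bar> \<le> d * exp (K * s)"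
    and dy: "\<And>s. 0 \<le> s \<Longrightarrow> \<bar>y s - y' s\<bar> \<le> d * exp (K * s)"
  shows "\<bar>integral {0..t} (truncated_rhs c x y) - integral {0..t} (truncated_rhs c x' y')\<bar>
    \<le> (1 + 2 * c) * d * exp (K * t) / K"
proof -
  have int: "truncated_rhs c x y integrable_on {0..t}" "truncated_rhs c x' y' integrable_on {0..t}"
    using cont by (auto intro!: integrable_continuous_interval
        continuous_on_subset[OF continuous_on_truncated_rhs])
  have d: "0 \<le> d"
    using dx[of 0] by simp
  have "\<bar>integral {0..t} (truncated_rhs c x y) - integral {0..t} (truncated_rhs c x' y')\<bar>
      = norm (integral {0..t} (\<lambda>s. truncated_rhs c x y s - truncated_rhs c x' y' s))"
    by (simp add: integral_diff[OF int])
  also have "\<dots> \<le> integral {0..t} (\<lambda>s. (1 + 2 * c) * d * exp (K * s))"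
  proof (rule integral_norm_bound_integral)
    show "(\<lambda>s. truncated_rhs c x y s - truncated_rhs c x' y' s) integrable_on {0..t}"
      using int by (rule integrable_diff)
    show "(\<lambda>s. (1 + 2 * c) * d * exp (K * s)) integrable_on {0..t}"
      by (intro integrable_continuous_interval continuous_intros)
    show "norm (truncated_rhs c x y s - truncated_rhs c x' y' s) \<le> (1 + 2 * c) * d * exp (K * s)"
      if "s \<in> {0..t}" for s
      using that c K dx dy by (auto intro!: truncated_rhs_weighted_lipschitz)
  qed
  also have "\<dots> = (1 + 2 * c) * d * ((exp (K * t) - 1) / K)"
    using has_integral_exp_scaled[of K t] K t by (simp add: integral_unique)
  also have "\<dots> \<le> (1 + 2 * c) * d * exp (K * t) / K"
    using K c d by (simp add: divide_right_mono mult_left_mono)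
  finally show ?thesis .
qed

lemma ext_cont_in_bcontfun:
  fixes f :: "'a::euclidean_space \<Rightarrow> 'b::metric_space"
  assumes "continuous_on (cbox a b) f"
  shows "ext_cont f a b \<in> bcontfun"
  unfolding bcontfun_def mem_Collect_eq
proof
  show "continuous_on UNIV (ext_cont f a b)"
    using assms by (rule continuous_on_ext_cont)
  show "bounded (range (ext_cont f a b))"
    unfolding ext_cont_def
    by (intro clamp_bounded compact_imp_bounded compact_continuous_image assms compact_cbox)
qed

text \<open>The unknown is u t = e^(-K t) x t, so that the sup distance on bcontfun is the
  weighted distance of the x's. The constant extension outside [0, T] by ext_cont only serves to
  produce an element of bcontfun.\<close>

definition weighted_picard_step ::
    "real \<Rightarrow> real \<Rightarrow> real \<Rightarrow> real \<Rightarrow> (real \<Rightarrow> real) \<Rightarrow> (real \<Rightarrow> real) \<Rightarrow> real \<Rightarrow> real" where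
  "weighted_picard_step c K T z u v = ext_cont (\<lambda>t. exp (-(K * t)) *
     (z + integral {0..t} (truncated_rhs c (\<lambda>s. exp (K * s) * u s) (\<lambda>s. exp (K * s) * v s)))) 0 T"

lemma weighted_picard_step_eq:
  assumes "t \<in> {0..T}"
  shows "weighted_picard_step c K T z u v t = exp (-(K * t)) *
     (z + integral {0..t} (truncated_rhs c (\<lambda>s. exp (K * s) * u s) (\<lambda>s. exp (K * s) * v s)))"
  using assms unfolding weighted_picard_step_def by (simp add: ext_cont_cancel_cbox)

lemma weighted_picard_step_in_bcontfun:
  assumes "continuous_on UNIV u" "continuous_on UNIV v"
  shows "weighted_picard_step c K T z u v \<in> bcontfun"
  unfolding weighted_picard_step_def
proof (rule ext_cont_in_bcontfun)
  have "continuous_on {0..T}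
      (truncated_rhs c (\<lambda>s. exp (K * s) * u s) (\<lambda>s. exp (K * s) * v s))"
    by (intro continuous_on_subset[OF continuous_on_truncated_rhs] continuous_intros
        continuous_on_subset[OF assms(1)] continuous_on_subset[OF assms(2)]) auto
  then show "continuous_on (cbox 0 T) (\<lambda>t. exp (-(K * t)) * (z + integral {0..t}
      (truncated_rhs c (\<lambda>s. exp (K * s) * u s) (\<lambda>s. exp (K * s) * v s))))"
    by (auto intro!: continuous_intros indefinite_integral_continuous_1 integrable_continuous_interval)
qed

lemma abs_weighted_picard_step_diff_le:
  assumes cont: "continuous_on UNIV u" "continuous_on UNIV v"
      "continuous_on UNIV u'" "continuous_on UNIV v'"
    and c: "0 \<le> c" and K: "0 < K" and T: "0 \<le> T"
    and du: "\<And>s. \<bar>u s - u' s\<bar> \<le> d" and dv: "\<And>s. \<bar>v s - v' s\<bar> \<le> d"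
  shows "\<bar>weighted_picard_step c K T z u v t - weighted_picard_step c K T z u' v' t\<bar>
    \<le> (1 + 2 * c) / K * d"
proof -
  define \<tau> where "\<tau> = clamp 0 T t"
  define I where "I u v = integral {0..\<tau>}
      (truncated_rhs c (\<lambda>s. exp (K * s) * u s) (\<lambda>s. exp (K * s) * v s))" for u v :: "real \<Rightarrow> real"
  have \<tau>: "\<tau> \<in> {0..T}"
    using clamp_in_interval[of 0 T t] T by (simp add: \<tau>_def)
  have step: "weighted_picard_step c K T z u v t = exp (-(K * \<tau>)) * (z + I u v)" for u v
    by (simp add: weighted_picard_step_def ext_cont_def \<tau>_def I_def)
  have weighted: "\<bar>exp (K * s) * a - exp (K * s) * b\<bar> \<le> d * exp (K * s)"
    if "\<bar>a - b\<bar> \<le> d" for a b s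
    using mult_right_mono[OF that, of "exp (K * s)"]
    by (simp add: abs_mult mult.commute[of "exp (K * s)"] flip: left_diff_distrib)
  have "\<bar>I u v - I u' v'\<bar> \<le> (1 + 2 * c) * d * exp (K * \<tau>) / K"
    unfolding I_def
    by (rule integral_truncated_rhs_weighted_lipschitz)
       (use c K \<tau> cont du dv weighted in \<open>auto intro!: continuous_intros
         intro: continuous_on_subset\<close>)
  then have "exp (-(K * \<tau>)) * \<bar>I u v - I u' v'\<bar>
      \<le> exp (-(K * \<tau>)) * ((1 + 2 * c) * d * exp (K * \<tau>) / K)"
    by (rule mult_left_mono) simp
  also have "\<dots> = (1 + 2 * c) / K * d"
    using K by (simp add: exp_minus field_simps)
  finally show ?thesis
    unfolding step by (simp add: abs_mult flip: right_diff_distrib)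
qed

lemma dist_weighted_picard_step_le:
  fixes u u' v v' :: "real \<Rightarrow>\<^sub>C real"
  assumes "0 \<le> c" "0 < K" "0 \<le> T"
  shows "dist (Bcontfun (weighted_picard_step c K T z u v)) (Bcontfun (weighted_picard_step c K T z u' v'))
    \<le> (1 + 2 * c) / K * max (dist u u') (dist v v')"
proof (rule dist_bound)
  fix t
  have "\<bar>weighted_picard_step c K T z u v t - weighted_picard_step c K T z u' v' t\<bar>
      \<le> (1 + 2 * c) / K * max (dist u u') (dist v v')"
    using dist_bounded[of u _ u'] dist_bounded[of v _ v']
    by (intro abs_weighted_picard_step_diff_le assms)
       (auto simp: dist_real_def intro: order_trans[OF _ max.cobounded1] order_trans[OF _ max.cobounded2])
  then show "dist (Bcontfun (weighted_picard_step c K T z u v) t)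
      (Bcontfun (weighted_picard_step c K T z u' v') t) \<le> (1 + 2 * c) / K * max (dist u u') (dist v v')"
    by (simp add: Bcontfun_inverse weighted_picard_step_in_bcontfun dist_real_def)
qed

lemma dist_Pair_le_add: "dist (a, b) (c, d) \<le> dist a c + dist b d"
  using sqrt_sum_squares_le_sum_abs[of "dist a c" "dist b d"] by (simp add: dist_Pair_Pair)

lemma truncated_system_has_solution:
  fixes c T x0 y0 :: real
  assumes c: "0 \<le> c" and T: "0 \<le> T"
  obtains x y where "continuous_on {0..} x" "continuous_on {0..} y"
    "\<And>t. t \<in> {0..T} \<Longrightarrow> x t = x0 + integral {0..t} (truncated_rhs c x y)"
    "\<And>t. t \<in> {0..T} \<Longrightarrow> y t = y0 + integral {0..t} (truncated_rhs c y x)"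
proof -
  define K where "K = 4 * (1 + 2 * c)"
  have K: "0 < K"
    using c by (simp add: K_def)
  define step :: "real \<Rightarrow> (real \<Rightarrow>\<^sub>C real) \<Rightarrow> (real \<Rightarrow>\<^sub>C real) \<Rightarrow> real \<Rightarrow>\<^sub>C real" where
    "step z u v = Bcontfun (weighted_picard_step c K T z u v)" for z u v
  define \<Phi> where "\<Phi> p = (step x0 (fst p) (snd p), step y0 (snd p) (fst p))" for p
  have step_dist: "dist (step z u v) (step z u' v') \<le> 1/4 * D"
    if "dist u u' \<le> D" "dist v v' \<le> D" for z u v u' v' D
  proof -
    have "dist (step z u v) (step z u' v') \<le> (1 + 2 * c) / K * max (dist u u') (dist v v')"
      unfolding step_def by (rule dist_weighted_picard_step_le[OF c K T])
    also have "\<dots> = 1/4 * max (dist u u') (dist v v')"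
      using c by (simp add: K_def field_simps)
    also have "\<dots> \<le> 1/4 * D"
      using that by simp
    finally show ?thesis .
  qed
  have "dist (\<Phi> p) (\<Phi> q) \<le> 1/2 * dist p q" for p q
  proof -
    have "dist (\<Phi> p) (\<Phi> q) \<le> dist (step x0 (fst p) (snd p)) (step x0 (fst q) (snd q))
        + dist (step y0 (snd p) (fst p)) (step y0 (snd q) (fst q))"
      unfolding \<Phi>_def by (rule dist_Pair_le_add)
    also have "\<dots> \<le> 1/4 * dist p q + 1/4 * dist p q"
      by (intro add_mono step_dist dist_fst_le dist_snd_le)
    finally show ?thesis by simp
  qed
  then obtain p where p: "\<Phi> p = p"
    using banach_fix_type[of "1/2" \<Phi>] by auto
  have step_eq: "exp (K * t) * step z u v t
      = z + integral {0..t} (truncated_rhs c (\<lambda>s. exp (K * s) * u s) (\<lambda>s. exp (K * s) * v s))"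
    if "t \<in> {0..T}" for z u v t
    using that by (simp add: step_def Bcontfun_inverse weighted_picard_step_in_bcontfun
        weighted_picard_step_eq exp_minus field_simps)
  show ?thesis
  proof
    show "continuous_on {0..} (\<lambda>s. exp (K * s) * fst p s)"
      "continuous_on {0..} (\<lambda>s. exp (K * s) * snd p s)"
      by (auto intro!: continuous_intros)
    fix t assume "t \<in> {0..T}"
    then show "exp (K * t) * fst p t = x0 + integral {0..t}
        (truncated_rhs c (\<lambda>s. exp (K * s) * fst p s) (\<lambda>s. exp (K * s) * snd p s))"
      "exp (K * t) * snd p t = y0 + integral {0..t}
        (truncated_rhs c (\<lambda>s. exp (K * s) * snd p s) (\<lambda>s. exp (K * s) * fst p s))"
      using step_eq p unfolding \<Phi>_def by (metis fst_conv snd_conv)+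
  qed
qed

lemma abs_le_if_truncated_integral_eq:
  assumes "continuous_on {0..} x" "continuous_on {0..} y" "0 \<le> c"
    and "\<bar>z\<bar> + c * T + c^2 * T \<le> c" "t \<in> {0..T}"
    and "x t = z + integral {0..t} (truncated_rhs c x y)"
  shows "\<bar>x t\<bar> \<le> c"
proof -
  have "\<bar>x t\<bar> \<le> \<bar>z\<bar> + (c + c^2) * t"
    using assms abs_integral_truncated_rhs_le[of x y c t] by auto
  also have "\<dots> \<le> \<bar>z\<bar> + (c + c^2) * T"
    using assms by (auto intro!: mult_left_mono)
  finally show ?thesis
    using assms(4) by (simp add: algebra_simps)
qed

lemma truncated_rhs_eq_untruncated:
  assumes "0 \<le> t" "\<And>s. s \<in> {0..t} \<Longrightarrow> \<bar>x s\<bar> \<le> c \<and> \<bar>y s\<bar> \<le> c"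
  shows "truncated_rhs c x y t = x t - (SUP s\<in>{0..t}. (y s)^2)"
proof -
  have "clamp (-c) c (w s) = w s" if "s \<in> {0..t}" "\<bar>w s\<bar> \<le> c" for w s
    using that by (intro clamp_cancel_cbox) auto
  then show ?thesis
    using assms unfolding truncated_rhs_def running_max_def by (auto intro!: SUP_cong)
qed

lemma has_real_derivative_if_integral_eq:
  fixes f x :: "real \<Rightarrow> real"
  assumes "continuous_on {0..T} f" "\<And>s. s \<in> {0..T} \<Longrightarrow> x s = z + integral {0..s} f"
    and "t \<in> {0..T}"
  shows "(x has_real_derivative f t) (at t within {0..T})"
proof (rule has_field_derivative_transform_within[OF _ zero_less_one \<open>t \<in> {0..T}\<close>])
  show "((\<lambda>s. z + integral {0..s} f) has_real_derivative f t) (at t within {0..T})"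
    using integral_has_vector_derivative[OF assms(1,3)]
    by (auto intro!: derivative_eq_intros simp: has_real_derivative_iff_has_vector_derivative)
qed (use assms(2) in simp)

theorem mainTheorem4:
  fixes x0 y0 T c0 :: real
  assumes "x0 > 0" and "y0 > 0" and "T > 0" and "c0 > 0"
    and "\<bar>x0\<bar> + \<bar>x0 - y0^2\<bar> * T \<le> c0"
    and "\<bar>y0\<bar> + \<bar>y0 - x0^2\<bar> * T \<le> c0"
    and "\<bar>x0\<bar> + c0 * T + c0^2 * T \<le> c0"
    and "\<bar>y0\<bar> + c0 * T + c0^2 * T \<le> c0"
  shows "\<exists>x y x' y' :: real \<Rightarrow> real.
           continuous_on {0..T} x' \<and> continuous_on {0..T} y' \<and>
           (\<forall>t\<in>{0..T}. (x has_real_derivative x' t) (at t within {0..T}) \<and>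
                           (y has_real_derivative y' t) (at t within {0..T})) \<and>
           (\<forall>t\<in>{0..T}. x' t = x t - (SUP s\<in>{0..t}. (y s)^2) \<and>
                           y' t = y t - (SUP s\<in>{0..t}. (x s)^2)) \<and>
           x 0 = x0 \<and> y 0 = y0"
proof -
  have c0: "0 \<le> c0" and T: "0 \<le> T"
    using assms by auto
  obtain x y where cont: "continuous_on {0..} x" "continuous_on {0..} y"
    and x: "\<And>t. t \<in> {0..T} \<Longrightarrow> x t = x0 + integral {0..t} (truncated_rhs c0 x y)"
    and y: "\<And>t. t \<in> {0..T} \<Longrightarrow> y t = y0 + integral {0..t} (truncated_rhs c0 y x)"
    using truncated_system_has_solution[of c0 T x0 y0] c0 T by blast
  have rhs: "truncated_rhs c0 x y t = x t - (SUP s\<in>{0..t}. (y s)^2)"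
    "truncated_rhs c0 y x t = y t - (SUP s\<in>{0..t}. (x s)^2)" if "t \<in> {0..T}" for t
    using that abs_le_if_truncated_integral_eq[OF cont c0 assms(7) _ x]
      abs_le_if_truncated_integral_eq[OF cont(2,1) c0 assms(8) _ y]
    by (auto intro!: truncated_rhs_eq_untruncated)
  have rhs_cont: "continuous_on {0..T} (truncated_rhs c0 x y)" "continuous_on {0..T} (truncated_rhs c0 y x)"
    using cont by (auto intro: continuous_on_subset[OF continuous_on_truncated_rhs])
  show ?thesis
  proof (rule exI[of _ x], rule exI[of _ y], rule exI[of _ "truncated_rhs c0 x y"],
      rule exI[of _ "truncated_rhs c0 y x"], intro conjI ballI)
    fix t assume t: "t \<in> {0..T}"
    show "(x has_real_derivative truncated_rhs c0 x y t) (at t within {0..T})"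
      by (rule has_real_derivative_if_integral_eq[OF rhs_cont(1) x t])
    show "(y has_real_derivative truncated_rhs c0 y x t) (at t within {0..T})"
      by (rule has_real_derivative_if_integral_eq[OF rhs_cont(2) y t])
    show "truncated_rhs c0 x y t = x t - (SUP s\<in>{0..t}. (y s)^2)"
      "truncated_rhs c0 y x t = y t - (SUP s\<in>{0..t}. (x s)^2)"
      using rhs t by blast+
  qed (use rhs_cont x[of 0] y[of 0] T in auto)
qed

end
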